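(* Let $X$ be a $\mathbb{Z}^n$-periodic discrete metric space with $N$ orbits and let $A\in\mathcal{W}(X)$ be $\mathbb{Z}^n$-periodic ($T_\alpha A=AT_\alpha$ for all $\alpha$). Then $UAU^{-1}$ is a shift-invariant operator in $W(\mathbb{Z}^n,\mathbb{C}^N)$: $UAU^{-1}=\sum_{\beta\in\mathbb{Z}^n}r_A(\beta)V_\beta$, where $r_A(\beta)=(r_A^{ij}(\beta,0))_{i,j=1}^N$ are constant matrices with $|r_A^{ij}(\beta,0)|\le h(\beta)$ for some nonnegative $h\in l^1(\mathbb{Z}^n)$; in particular $A$ is isometrically equivalent (via the isometry $U$) to this shift-invariant matrix operator.
   Context: A discrete metric space is a countable set $X$ with a metric $\rho$ such that every ball is finite. It is $\mathbb{Z}^n$-periodic if $\mathbb{Z}^n$ acts on $X$ by $\rho$-isometries, $(\alpha,x)\mapsto\alpha\cdot x$ (a group action), freely, with finitely many orbits; $x_1,\dots,x_N$ are fixed orbit representatives. $U$: $(Uf)(\alpha)=(f(\alpha\cdot x_1),\dots,f(\alpha\cdot x_N))$, an isometry $l^p(X)\to l^p(\mathbb{Z}^n,\mathbb{C}^N)$. $(T_\alpha u)(x)=u((-\alpha)\cdot x)$, $(V_\beta u)(x)=u(x-\beta)$. For a linear operator $A$ with generating function $k_A$ (i.e. $(Au)(x)=\sum_y k_A(x,y)u(y)$ for finitely supported $u$), $r_A^{ij}(\alpha,\beta)=k_A(\alpha\cdot x_i,\beta\cdot x_j)$. $\mathcal{W}(X)$: such operators with $\max_j\sum_i|r_A^{ij}(\alpha,\beta)|\le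 h_A(\alpha-\beta)$ for some $h_A\in l^1(\mathbb{Z}^n)$. $W(\mathbb{Z}^n,\mathbb{C}^N)$: operators $\sum_\alpha a_\alpha V_\alpha$, $a_\alpha\in l^\infty(\mathbb{Z}^n,\mathbb{C}^{N\times N})$, with $\sum_\alpha\|a_\alpha\|_{l^\infty}<\infty$. *)

theory Defs
  imports "HOL-Analysis.Analysis"
begin

definition discrete_metric_space :: "('x \<Rightarrow> 'x \<Rightarrow> real) \<Rightarrow> bool" where
  "discrete_metric_space \<rho> \<longleftrightarrow>
     countable (UNIV :: 'x set) \<and>
     (\<forall>x y. \<rho> x y = 0 \<longleftrightarrow> x = y) \<and>
     (\<forall>x y. \<rho> x y = \<rho> y x) \<and>
     (\<forall>x y z. \<rho> x z \<le> \<rho> x y + \<rho> y z) \<and>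
     (\<forall>x r. finite {y. \<rho> x y \<le> r})"

text \<open>Z^n-periodic discrete metric space; the orbits are indexed by the finite type 'i
  (so N = CARD('i)), xs i being the fixed orbit representatives.\<close>
definition periodic_space ::
  "('x \<Rightarrow> 'x \<Rightarrow> real) \<Rightarrow> (int^'n \<Rightarrow> 'x \<Rightarrow> 'x) \<Rightarrow> ('i::finite \<Rightarrow> 'x) \<Rightarrow> bool" where
  "periodic_space \<rho> act xs \<longleftrightarrow>
     discrete_metric_space \<rho> \<and>
     (\<forall>x. act 0 x = x) \<and>
     (\<forall>a b x. act (a + b) x = act a (act b x)) \<and>
     (\<forall>a x y. \<rho> (act a x) (act a y) = \<rho> x y) \<and>
     (\<forall>a x. act a x = x \<longrightarrow> a = 0) \<and>
     (\<forall>x. \<exists>a i. x = act a (xs i)) \<and>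
     (\<forall>a i j. act a (xs i) = xs j \<longrightarrow> i = j)"

definition fin_supp :: "('a \<Rightarrow> 'b::zero) \<Rightarrow> bool" where
  "fin_supp u \<longleftrightarrow> finite {y. u y \<noteq> 0}"

definition Top :: "(int^'n \<Rightarrow> 'x \<Rightarrow> 'x) \<Rightarrow> int^'n \<Rightarrow> ('x \<Rightarrow> complex) \<Rightarrow> ('x \<Rightarrow> complex)" where
  "Top act \<alpha> u = (\<lambda>x. u (act (- \<alpha>) x))"

definition Vop :: "int^'n \<Rightarrow> (int^'n \<Rightarrow> 'b) \<Rightarrow> (int^'n \<Rightarrow> 'b)" where
  "Vop \<beta> v = (\<lambda>\<alpha>. v (\<alpha> - \<beta>))"

definition gen_fun :: "(('x \<Rightarrow> complex) \<Rightarrow> ('x \<Rightarrow> complex)) \<Rightarrow> ('x \<Rightarrow> 'x \<Rightarrow> complex) \<Rightarrow> bool" where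
  "gen_fun A k \<longleftrightarrow> (\<forall>u. fin_supp u \<longrightarrow> A u = (\<lambda>x. \<Sum>y\<in>{y. u y \<noteq> 0}. k x y * u y))"

definition Uop :: "(int^'n \<Rightarrow> 'x \<Rightarrow> 'x) \<Rightarrow> ('i::finite \<Rightarrow> 'x) \<Rightarrow> ('x \<Rightarrow> complex) \<Rightarrow> (int^'n \<Rightarrow> complex^'i)" where
  "Uop act xs f = (\<lambda>\<alpha>. \<chi> i. f (act \<alpha> (xs i)))"

definition Uinv :: "(int^'n \<Rightarrow> 'x \<Rightarrow> 'x) \<Rightarrow> ('i::finite \<Rightarrow> 'x) \<Rightarrow> (int^'n \<Rightarrow> complex^'i) \<Rightarrow> ('x \<Rightarrow> complex)" where
  "Uinv act xs v = (\<lambda>x. THE c. \<exists>\<alpha> i. x = act \<alpha> (xs i) \<and> c = v \<alpha> $ i)"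

definition rker :: "(int^'n \<Rightarrow> 'x \<Rightarrow> 'x) \<Rightarrow> ('i::finite \<Rightarrow> 'x) \<Rightarrow> ('x \<Rightarrow> 'x \<Rightarrow> complex)
    \<Rightarrow> 'i \<Rightarrow> 'i \<Rightarrow> int^'n \<Rightarrow> int^'n \<Rightarrow> complex" where
  "rker act xs k i j \<alpha> \<beta> = k (act \<alpha> (xs i)) (act \<beta> (xs j))"

definition in_WX :: "(int^'n \<Rightarrow> 'x \<Rightarrow> 'x) \<Rightarrow> ('i::finite \<Rightarrow> 'x) \<Rightarrow> ('x \<Rightarrow> 'x \<Rightarrow> complex) \<Rightarrow> bool" where
  "in_WX act xs k \<longleftrightarrow> (\<exists>h :: int^'n \<Rightarrow> real. h summable_on UNIV \<and>
      (\<forall>\<alpha> \<beta> j. (\<Sum>i\<in>UNIV. norm (rker act xs k i j \<alpha> \<beta>)) \<le> h (\<alpha> - \<beta>)))"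

definition shift_op :: "(int^'n \<Rightarrow> complex^'i^'i) \<Rightarrow> (int^'n \<Rightarrow> complex^'i) \<Rightarrow> (int^'n \<Rightarrow> complex^'i)" where
  "shift_op a v = (\<lambda>\<alpha>. \<Sum>\<^sub>\<infinity>\<beta>. a \<beta> *v Vop \<beta> v \<alpha>)"

end

theory Submission
  imports Defs
begin

text \<open>Periodicity of \<open>A\<close>, tested on point masses, says that its kernel is invariant under the
  diagonal action: \<open>k (-a\<cdot>x) y = k x (a\<cdot>y)\<close>. In the orbit coordinates \<open>x = \<alpha>\<cdot>x\<^sub>i\<close> the kernel
  therefore depends only on the difference of the lattice coordinates, so \<open>U A U\<^sup>-\<^sup>1\<close> is a
  convolution with the matrix sequence \<open>r\<^sub>A(\<beta>) = r\<^sub>A(\<beta>, 0)\<close>, and the \<open>l\<^sup>1\<close> majorant \<open>h\<^sub>A\<close>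
  from the definition of \<open>\<W>(X)\<close> bounds each of its entries.\<close>

lemma shift_op_fin_supp:
  assumes "fin_supp v"
  shows "shift_op a v \<alpha> = (\<Sum>g\<in>{g. v g \<noteq> 0}. a (\<alpha> - g) *v v g)"
proof -
  define B where "B = {g. v g \<noteq> 0}"
  have "finite B" using assms unfolding fin_supp_def B_def .
  define F where "F = (\<lambda>\<beta>. a \<beta> *v Vop \<beta> v \<alpha>)"
  have "shift_op a v \<alpha> = infsum F UNIV"
    by (simp add: shift_op_def F_def)
  also have "\<dots> = infsum F ((\<lambda>g. \<alpha> - g) ` B)"
  proof (rule infsum_cong_neutral)
    fix \<beta> assume "\<beta> \<in> UNIV - (\<lambda>g. \<alpha> - g) ` B"
    then have "\<beta> \<notin> (\<lambda>g. \<alpha> - g) ` B" by simp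
    then have "\<alpha> - \<beta> \<notin> B" by (auto intro: image_eqI[where x = "\<alpha> - \<beta>"])
    then show "F \<beta> = 0" by (simp add: F_def Vop_def B_def)
  qed auto
  also have "\<dots> = sum F ((\<lambda>g. \<alpha> - g) ` B)" using \<open>finite B\<close> by simp
  also have "\<dots> = (\<Sum>g\<in>B. F (\<alpha> - g))"
    by (subst sum.reindex) (auto simp: inj_on_def)
  finally show ?thesis by (simp add: F_def Vop_def B_def)
qed

lemma in_WX_entry_majorant:
  fixes act :: "int^'n \<Rightarrow> 'x \<Rightarrow> 'x"
  assumes "in_WX act xs k"
  obtains h :: "int^'n \<Rightarrow> real"
  where "\<And>\<gamma>. 0 \<le> h \<gamma>" "h summable_on UNIV"
    "\<And>\<alpha> \<beta> i j. norm (rker act xs k i j \<alpha> \<beta>) \<le> h (\<alpha> - \<beta>)"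
proof -
  obtain h :: "int^'n \<Rightarrow> real" where "h summable_on UNIV"
    and col: "\<And>\<alpha> \<beta> j. (\<Sum>i\<in>UNIV. norm (rker act xs k i j \<alpha> \<beta>)) \<le> h (\<alpha> - \<beta>)"
    using assms unfolding in_WX_def by blast
  moreover have entry: "norm (rker act xs k i j \<alpha> \<beta>) \<le> h (\<alpha> - \<beta>)" for \<alpha> \<beta> i j
    by (rule order_trans[OF member_le_sum col]) auto
  moreover have "0 \<le> h \<beta>" for \<beta>
    using entry[of undefined undefined \<beta> 0] norm_ge_zero order_trans by (metis diff_zero)
  ultimately show ?thesis using that by blast
qed

locale free_lattice_action =
  fixes act :: "int^'n \<Rightarrow> 'x \<Rightarrow> 'x" and xs :: "'i::finite \<Rightarrow> 'x"
  assumes act_zero: "act 0 x = x"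
    and act_add: "act (a + b) x = act a (act b x)"
    and act_free: "act a x = x \<Longrightarrow> a = 0"
    and orbit_cover: "\<exists>a i. x = act a (xs i)"
    and orbit_distinct: "act a (xs i) = xs j \<Longrightarrow> i = j"

lemma periodic_space_free_lattice_action:
  "periodic_space \<rho> act xs \<Longrightarrow> free_lattice_action act xs"
  unfolding periodic_space_def free_lattice_action_def by (elim conjE) (intro conjI; assumption)

context free_lattice_action
begin

lemma act_minus_cancel [simp]: "act (- a) (act a x) = x" "act a (act (- a) x) = x"
  by (simp_all add: act_add[symmetric] act_zero)

lemma orbit_coords_unique:
  assumes "act a (xs i) = act b (xs j)"
  shows "a = b \<and> i = j"
proof -
  have "act (- b + a) (xs i) = act (- b) (act a (xs i))" by (rule act_add)
  also have "\<dots> = act (- b) (act b (xs j))" using assms by (rule arg_cong)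
  also have "\<dots> = xs j" by (rule act_minus_cancel)
  finally have e: "act (- b + a) (xs i) = xs j" .
  then have "i = j" by (rule orbit_distinct)
  with e have "- b + a = 0" by (intro act_free) simp
  with \<open>i = j\<close> show ?thesis by (simp add: add.commute)
qed

lemma Uinv_orbit [simp]: "Uinv act xs v (act a (xs i)) = v a $ i"
  unfolding Uinv_def
proof (rule the_equality)
  fix c assume "\<exists>\<alpha> j. act a (xs i) = act \<alpha> (xs j) \<and> c = v \<alpha> $ j"
  then obtain \<alpha> j where "act a (xs i) = act \<alpha> (xs j)" and "c = v \<alpha> $ j" by blast
  with orbit_coords_unique[of a i \<alpha> j] show "c = v a $ i" by simp
qed blast

lemma orbit_coords_inj: "inj (\<lambda>(g, j). act g (xs j))"
proof (rule injI)
  fix p q :: "(int^'n) \<times> 'i"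
  assume "(\<lambda>(g, j). act g (xs j)) p = (\<lambda>(g, j). act g (xs j)) q"
  then have "act (fst p) (xs (snd p)) = act (fst q) (xs (snd q))" by (simp add: case_prod_beta)
  from orbit_coords_unique[OF this] show "p = q" by (simp add: prod_eq_iff)
qed

lemma Uinv_support:
  "{y. Uinv act xs v y \<noteq> 0} \<subseteq> (\<lambda>(g, j). act g (xs j)) ` ({g. v g \<noteq> 0} \<times> UNIV)"
proof
  fix y assume "y \<in> {y. Uinv act xs v y \<noteq> 0}"
  moreover obtain a i where y: "y = act a (xs i)" using orbit_cover by blast
  ultimately have "v a $ i \<noteq> 0" by simp
  then have "v a \<noteq> 0" by (metis zero_index)
  then show "y \<in> (\<lambda>(g, j). act g (xs j)) ` ({g. v g \<noteq> 0} \<times> UNIV)"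
    unfolding y by (intro image_eqI[where x = "(a, i)"]) simp_all
qed

lemma fin_supp_Uinv:
  assumes "fin_supp v"
  shows "fin_supp (Uinv act xs v)"
proof -
  have "finite ((\<lambda>(g, j). act g (xs j)) ` ({g. v g \<noteq> 0} \<times> UNIV))"
    using assms by (simp add: fin_supp_def)
  then show ?thesis unfolding fin_supp_def by (rule finite_subset[OF Uinv_support])
qed

lemma gen_fun_Uinv_orbit:
  assumes "gen_fun A k" "fin_supp v"
  shows "A (Uinv act xs v) y
    = (\<Sum>g\<in>{g. v g \<noteq> 0}. \<Sum>j\<in>UNIV. k y (act g (xs j)) * v g $ j)"
proof -
  define B where "B = {g. v g \<noteq> 0}"
  define P where "P = (\<lambda>(g, j). act g (xs j)) ` (B \<times> UNIV)"
  have "finite B" using assms(2) unfolding fin_supp_def B_def .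
  then have "finite P" unfolding P_def by simp
  have inj: "inj_on (\<lambda>(g, j). act g (xs j)) (B \<times> UNIV)"
    using orbit_coords_inj by (rule inj_on_subset) simp
  have "A (Uinv act xs v) = (\<lambda>x. \<Sum>z\<in>{z. Uinv act xs v z \<noteq> 0}. k x z * Uinv act xs v z)"
    using assms(1) fin_supp_Uinv[OF assms(2)] unfolding gen_fun_def by blast
  then have "A (Uinv act xs v) y = (\<Sum>z\<in>{z. Uinv act xs v z \<noteq> 0}. k y z * Uinv act xs v z)"
    by (rule fun_cong)
  also have "\<dots> = (\<Sum>z\<in>P. k y z * Uinv act xs v z)"
  proof (rule sum.mono_neutral_left[OF \<open>finite P\<close>])
    show "{z. Uinv act xs v z \<noteq> 0} \<subseteq> P" unfolding P_def B_def by (rule Uinv_support)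
  qed simp
  also have "\<dots> = (\<Sum>(g, j)\<in>B \<times> UNIV. k y (act g (xs j)) * v g $ j)"
    unfolding P_def by (subst sum.reindex[OF inj]) (simp add: case_prod_unfold)
  also have "\<dots> = (\<Sum>g\<in>B. \<Sum>j\<in>UNIV. k y (act g (xs j)) * v g $ j)"
    by (rule sum.cartesian_product[symmetric])
  finally show ?thesis unfolding B_def .
qed

lemma Top_point_mass: "Top act a (\<lambda>z. if z = y then c else 0) = (\<lambda>z. if z = act a y then c else 0)"
  unfolding Top_def by (metis act_minus_cancel)

lemma periodic_kernel_shift:
  assumes "gen_fun A k" "\<forall>\<alpha> u. fin_supp u \<longrightarrow> Top act \<alpha> (A u) = A (Top act \<alpha> u)"
  shows "k (act (- a) x) y = k x (act a y)"
proof -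
  have A_point_mass: "A (\<lambda>z. if z = w then 1 else 0) = (\<lambda>x. k x w)" for w
    using assms(1) unfolding gen_fun_def fin_supp_def by simp
  have "(\<lambda>x. k (act (- a) x) y) = Top act a (A (\<lambda>z. if z = y then 1 else 0))"
    by (simp add: A_point_mass Top_def)
  also have "\<dots> = A (\<lambda>z. if z = act a y then 1 else 0)"
    using assms(2) by (simp add: fin_supp_def Top_point_mass)
  also have "\<dots> = (\<lambda>x. k x (act a y))" by (rule A_point_mass)
  finally show ?thesis by (rule fun_cong)
qed

lemma periodic_kernel_rker:
  assumes "gen_fun A k" "\<forall>\<alpha> u. fin_supp u \<longrightarrow> Top act \<alpha> (A u) = A (Top act \<alpha> u)"
  shows "k (act a (xs i)) (act b (xs j)) = rker act xs k i j (a - b) 0"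
  using periodic_kernel_shift[OF assms, of b "act a (xs i)" "xs j"]
  by (simp add: rker_def act_zero act_add[symmetric] algebra_simps)

end

theorem proposition4p2:
  fixes \<rho> :: "'x \<Rightarrow> 'x \<Rightarrow> real" and act :: "int^'n \<Rightarrow> 'x \<Rightarrow> 'x"
    and xs :: "'i::finite \<Rightarrow> 'x"
    and A :: "('x \<Rightarrow> complex) \<Rightarrow> ('x \<Rightarrow> complex)" and k :: "'x \<Rightarrow> 'x \<Rightarrow> complex"
  assumes "periodic_space \<rho> act xs"
    and "gen_fun A k"
    and "in_WX act xs k"
    and "\<forall>\<alpha> u. fin_supp u \<longrightarrow> Top act \<alpha> (A u) = A (Top act \<alpha> u)"
  shows "(\<forall>v. fin_supp v \<longrightarrow>
            Uop act xs (A (Uinv act xs v)) = shift_op (\<lambda>\<beta>. \<chi> i j. rker act xs k i j \<beta> 0) v)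
       \<and> (\<exists>h :: int^'n \<Rightarrow> real. (\<forall>\<beta>. 0 \<le> h \<beta>) \<and> h summable_on UNIV \<and>
            (\<forall>\<beta> i j. norm (rker act xs k i j \<beta> 0) \<le> h \<beta>))"
proof
  interpret free_lattice_action act xs
    using assms(1) by (rule periodic_space_free_lattice_action)
  show "\<forall>v. fin_supp v \<longrightarrow>
          Uop act xs (A (Uinv act xs v)) = shift_op (\<lambda>\<beta>. \<chi> i j. rker act xs k i j \<beta> 0) v"
  proof (intro allI impI ext)
    fix v :: "int^'n \<Rightarrow> complex^'i" and \<alpha>
    assume "fin_supp v"
    then show "Uop act xs (A (Uinv act xs v)) \<alpha> = shift_op (\<lambda>\<beta>. \<chi> i j. rker act xs k i j \<beta> 0) v \<alpha>"
      by (simp add: shift_op_fin_supp gen_fun_Uinv_orbit[OF assms(2)]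
          periodic_kernel_rker[OF assms(2,4)] Uop_def vec_eq_iff sum_component
          matrix_vector_mult_def)
  qed
next
  obtain h :: "int^'n \<Rightarrow> real" where "\<And>\<beta>. 0 \<le> h \<beta>" "h summable_on UNIV"
    "\<And>\<alpha> \<beta> i j. norm (rker act xs k i j \<alpha> \<beta>) \<le> h (\<alpha> - \<beta>)"
    using in_WX_entry_majorant[OF assms(3)] by blast
  then show "\<exists>h :: int^'n \<Rightarrow> real. (\<forall>\<beta>. 0 \<le> h \<beta>) \<and> h summable_on UNIV \<and>
      (\<forall>\<beta> i j. norm (rker act xs k i j \<beta> 0) \<le> h \<beta>)"
    by (metis diff_zero)
qed

end
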